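(* Let $X$ be a $G$-space and $\rho_X\colon X\to X/G$ the orbit map. Then $\mathrm{cat}(\rho_X)\le\mathrm{cat}^{G,\infty}(X)$.
   Context: All spaces are well-pointed CW complexes, $G$ a topological group acting cellularly; $x_0\in X$ is the base point. For a map $f\colon X\to Y$, $\mathrm{cat}(f)$ is the least $n\ge0$ such that $X$ has an open cover by $n+1$ sets on each of which $f$ is nullhomotopic. $PX$ is the path space; $\mathcal{P}_k(X)=\{(\gamma_1,\dots,\gamma_k)\in(PX)^k\mid G\gamma_i(1)=G\gamma_{i+1}(0),\ 1\le i\le k-1\}$; $P^k_*(X)=\{(\gamma_1,\dots,\gamma_k)\in\mathcal{P}_k(X)\mid\gamma_1(0)=x_0\}$ with fibration $q_k\colon P^k_*(X)\to X$, $q_k(\gamma_1,\dots,\gamma_k)=\gamma_k(1)$. $\mathrm{secat}(f)$ (reduced) is the least $n$ such that the base of $f$ has an open cover $U_0,\dots,U_n$ with homotopy sections of $f$ over each $U_i$. $\mathrm{cat}^{G,k}(X)=\mathrm{secat}(q_k)$ and $\mathrm{cat}^{G,\infty}(X)=\min_{k\ge1}\mathrm{cat}^{G,k}(X)$. *)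

theory Defs
  imports "HOL-Analysis.Analysis" "HOL-Algebra.Group" "HOL-Library.Extended_Nat"
begin

definition topological_group :: "('g, 'b) monoid_scheme \<Rightarrow> 'g topology \<Rightarrow> bool" where
  "topological_group G TG \<longleftrightarrow>
     group G \<and> topspace TG = carrier G \<and>
     continuous_map (prod_topology TG TG) TG (\<lambda>(g, h). g \<otimes>\<^bsub>G\<^esub> h) \<and>
     continuous_map TG TG (\<lambda>g. inv\<^bsub>G\<^esub> g)"

definition G_space :: "('g, 'b) monoid_scheme \<Rightarrow> 'g topology \<Rightarrow> 'a topology \<Rightarrow> ('g \<Rightarrow> 'a \<Rightarrow> 'a) \<Rightarrow> bool" where
  "G_space G TG X act \<longleftrightarrow>
     topological_group G TG \<and>
     continuous_map (prod_topology TG X) X (\<lambda>(g, x). act g x) \<and>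
     (\<forall>x\<in>topspace X. act \<one>\<^bsub>G\<^esub> x = x) \<and>
     (\<forall>g\<in>carrier G. \<forall>h\<in>carrier G. \<forall>x\<in>topspace X. act (g \<otimes>\<^bsub>G\<^esub> h) x = act g (act h x))"

text \<open>The orbit G x; the orbit map is \<open>\<rho>_X = G_orbit G act\<close>.\<close>
definition G_orbit :: "('g, 'b) monoid_scheme \<Rightarrow> ('g \<Rightarrow> 'a \<Rightarrow> 'a) \<Rightarrow> 'a \<Rightarrow> 'a set" where
  "G_orbit G act x = {act g x | g. g \<in> carrier G}"

text \<open>The orbit space X/G with the quotient topology (points are orbits).  The family below
  is already a topology, so generating a topology from it changes nothing.\<close>
definition orbit_space :: "('g, 'b) monoid_scheme \<Rightarrow> 'a topology \<Rightarrow> ('g \<Rightarrow> 'a \<Rightarrow> 'a) \<Rightarrow> 'a set topology" where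
  "orbit_space G X act = topology_generated_by
     {U. U \<subseteq> G_orbit G act ` topspace X \<and> openin X {x \<in> topspace X. G_orbit G act x \<in> U}}"

definition paths_in :: "'a topology \<Rightarrow> (real \<Rightarrow> 'a) set" where
  "paths_in X = {p. pathin X p \<and> (\<forall>t. t \<notin> {0..1} \<longrightarrow> p t = undefined)}"

definition path_space :: "'a topology \<Rightarrow> (real \<Rightarrow> 'a) topology" where
  "path_space X = topology_generated_by
     {{p \<in> paths_in X. p ` K \<subseteq> V} | K V.
        compactin (subtopology euclideanreal {0..1}) K \<and> openin X V}"

text \<open>\<open>\<P>_k(X)\<close>: k-tuples of paths, indexed by 0..k-1, with G gamma_i(1) = G gamma_(i+1)(0).\<close>
definition multipath_space :: "('g, 'b) monoid_scheme \<Rightarrow> ('g \<Rightarrow> 'a \<Rightarrow> 'a) \<Rightarrow> 'a topology \<Rightarrow> nat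
    \<Rightarrow> (nat \<Rightarrow> real \<Rightarrow> 'a) topology" where
  "multipath_space G act X k =
     subtopology (product_topology (\<lambda>i. path_space X) {..<k})
       {\<gamma>. \<forall>i. Suc i < k \<longrightarrow> G_orbit G act (\<gamma> i 1) = G_orbit G act (\<gamma> (Suc i) 0)}"

definition based_multipath_space :: "('g, 'b) monoid_scheme \<Rightarrow> ('g \<Rightarrow> 'a \<Rightarrow> 'a) \<Rightarrow> 'a topology \<Rightarrow> 'a
    \<Rightarrow> nat \<Rightarrow> (nat \<Rightarrow> real \<Rightarrow> 'a) topology" where
  "based_multipath_space G act X x0 k =
     subtopology (multipath_space G act X k) {\<gamma>. \<gamma> 0 0 = x0}"

definition end_map :: "nat \<Rightarrow> (nat \<Rightarrow> real \<Rightarrow> 'a) \<Rightarrow> 'a" where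
  "end_map k \<gamma> = \<gamma> (k - 1) 1"

text \<open>LS category of a map (reduced), with value \<infinity> if no finite cover exists.\<close>
definition map_cat :: "'a topology \<Rightarrow> 'c topology \<Rightarrow> ('a \<Rightarrow> 'c) \<Rightarrow> enat" where
  "map_cat X Y f = Inf {enat n | n. \<exists>U :: nat \<Rightarrow> 'a set.
      (\<forall>i\<le>n. openin X (U i)) \<and> topspace X \<subseteq> (\<Union>i\<le>n. U i) \<and>
      (\<forall>i\<le>n. \<exists>c. homotopic_with (\<lambda>_. True) (subtopology X (U i)) Y f (\<lambda>_. c))}"

text \<open>Sectional category (reduced) of a map p : E \<rightarrow> B, with value \<infinity> if no finite cover exists.\<close>
definition secat :: "'e topology \<Rightarrow> 'a topology \<Rightarrow> ('e \<Rightarrow> 'a) \<Rightarrow> enat" where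
  "secat E B p = Inf {enat n | n. \<exists>U :: nat \<Rightarrow> 'a set.
      (\<forall>i\<le>n. openin B (U i)) \<and> topspace B \<subseteq> (\<Union>i\<le>n. U i) \<and>
      (\<forall>i\<le>n. \<exists>s. continuous_map (subtopology B (U i)) E s \<and>
                 homotopic_with (\<lambda>_. True) (subtopology B (U i)) B (p \<circ> s) id)}"

definition cat_G_k :: "('g, 'b) monoid_scheme \<Rightarrow> ('g \<Rightarrow> 'a \<Rightarrow> 'a) \<Rightarrow> 'a topology \<Rightarrow> 'a \<Rightarrow> nat \<Rightarrow> enat" where
  "cat_G_k G act X x0 k = secat (based_multipath_space G act X x0 k) X (end_map k)"

definition cat_G_infty :: "('g, 'b) monoid_scheme \<Rightarrow> ('g \<Rightarrow> 'a \<Rightarrow> 'a) \<Rightarrow> 'a topology \<Rightarrow> 'a \<Rightarrow> enat" where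
  "cat_G_infty G act X x0 = (INF k\<in>{1..}. cat_G_k G act X x0 k)"

end

theory Submission
  imports Defs
begin

text \<open>A local homotopy section \<open>s\<close> of \<open>q\<^sub>k\<close> over \<open>U\<close> makes the orbit map on \<open>U\<close> homotopic to
  \<open>\<rho> \<circ> q\<^sub>k \<circ> s\<close>, the orbit of the end point of the last path of \<open>s x\<close>.  Sliding backwards along
  the paths of the tuple \<open>s x\<close>, and jumping between consecutive paths inside the same orbit,
  deforms this in \<open>X/G\<close> to the orbit of the start point of the first path, which is the constant
  \<open>G x\<^sub>0\<close>.  Hence every set of a sectional cover of \<open>q\<^sub>k\<close> is a categorical set of \<open>\<rho>\<close>.\<close>

lemma map_cat_le_secat:
  assumes "\<And>U s. \<lbrakk>openin B U; continuous_map (subtopology B U) E s;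
                   homotopic_with (\<lambda>_. True) (subtopology B U) B (p \<circ> s) id\<rbrakk>
               \<Longrightarrow> \<exists>c. homotopic_with (\<lambda>_. True) (subtopology B U) Y f (\<lambda>_. c)"
  shows "map_cat B Y f \<le> secat E B p"
  unfolding map_cat_def secat_def
proof (rule Inf_superset_mono, safe)
  fix n and U :: "nat \<Rightarrow> 'a set"
  assume U: "\<forall>i\<le>n. openin B (U i)" "topspace B \<subseteq> (\<Union>i\<le>n. U i)"
    and sections: "\<forall>i\<le>n. \<exists>s. continuous_map (subtopology B (U i)) E s \<and>
                    homotopic_with (\<lambda>_. True) (subtopology B (U i)) B (p \<circ> s) id"
  have "\<exists>c. homotopic_with (\<lambda>_. True) (subtopology B (U i)) Y f (\<lambda>_. c)" if "i \<le> n" for i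
  proof -
    obtain s where "continuous_map (subtopology B (U i)) E s"
      and "homotopic_with (\<lambda>_. True) (subtopology B (U i)) B (p \<circ> s) id"
      using sections \<open>i \<le> n\<close> by blast
    with U(1) \<open>i \<le> n\<close> show ?thesis
      by (intro assms) simp_all
  qed
  with U show "\<exists>m. enat n = enat m \<and> (\<exists>U. (\<forall>i\<le>m. openin B (U i)) \<and> topspace B \<subseteq> (\<Union>i\<le>m. U i) \<and>
      (\<forall>i\<le>m. \<exists>c. homotopic_with (\<lambda>_. True) (subtopology B (U i)) Y f (\<lambda>_. c)))"
    by (intro exI[of _ n] conjI exI[of _ U]) simp_all
qed

lemma continuous_map_quotient_topology:
  "continuous_map X
     (topology_generated_by {U. U \<subseteq> f ` topspace X \<and> openin X {x \<in> topspace X. f x \<in> U}}) f"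
  (is "continuous_map X (topology_generated_by ?S) f")
proof -
  have "{x \<in> topspace X. f x \<in> f ` topspace X} = topspace X"
    by blast
  then have "f ` topspace X \<in> ?S"
    by simp
  then have "topspace (topology_generated_by ?S) = f ` topspace X"
    by auto
  moreover have "openin X {x \<in> topspace X. f x \<in> U}" if "generate_topology_on ?S U" for U
  proof (rule generate_topology_on_coarsest[OF _ _ that])
    show "istopology (\<lambda>U. openin X {x \<in> topspace X. f x \<in> U})"
      unfolding istopology_def
    proof (intro conjI allI impI)
      fix S T assume "openin X {x \<in> topspace X. f x \<in> S}" "openin X {x \<in> topspace X. f x \<in> T}"
      then have "openin X ({x \<in> topspace X. f x \<in> S} \<inter> {x \<in> topspace X. f x \<in> T})"
        by (rule openin_Int)
      moreover have "{x \<in> topspace X. f x \<in> S} \<inter> {x \<in> topspace X. f x \<in> T} =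
                     {x \<in> topspace X. f x \<in> S \<inter> T}"
        by blast
      ultimately show "openin X {x \<in> topspace X. f x \<in> S \<inter> T}"
        by simp
    next
      fix \<K> assume "\<forall>K\<in>\<K>. openin X {x \<in> topspace X. f x \<in> K}"
      then have "openin X (\<Union>K\<in>\<K>. {x \<in> topspace X. f x \<in> K})"
        by blast
      moreover have "(\<Union>K\<in>\<K>. {x \<in> topspace X. f x \<in> K}) = {x \<in> topspace X. f x \<in> \<Union>\<K>}"
        by blast
      ultimately show "openin X {x \<in> topspace X. f x \<in> \<Union>\<K>}"
        by simp
    qed
  qed auto
  ultimately show ?thesis
    by (auto simp: continuous_map_def dest: openin_topology_generated_by)
qed

lemma continuous_map_orbit_map: "continuous_map X (orbit_space G X act) (G_orbit G act)"
  unfolding orbit_space_def by (rule continuous_map_quotient_topology)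

lemma topspace_path_space: "topspace (path_space X) = paths_in X"
proof -
  have "paths_in X \<in> {{p \<in> paths_in X. p ` K \<subseteq> V} | K V.
        compactin (subtopology euclideanreal {0..1}) K \<and> openin X V}"
    by (rule CollectI, rule exI[of _ "{}"], rule exI[of _ "topspace X"]) auto
  then show ?thesis
    unfolding path_space_def by auto
qed

lemma continuous_map_path_evaluation:
  "continuous_map (prod_topology (top_of_set {0..1}) (path_space X)) X (\<lambda>(t, p). p t)"
  (is "continuous_map ?T X ?ev")
proof -
  have "openin ?T {z \<in> topspace ?T. ?ev z \<in> V}" if V: "openin X V" for V
  proof (subst openin_subopen, safe)
    fix t p assume "(t, p) \<in> topspace ?T" and ptV: "p t \<in> V"
    then have t: "t \<in> {0..1}" and p: "p \<in> paths_in X"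
      by (auto simp: topspace_path_space)
    then have "openin (top_of_set {0..1}) {s \<in> {0..1::real}. p s \<in> V}"
      using V by (auto simp: paths_in_def pathin_def continuous_map_def)
    then obtain d where "d > 0" and d: "\<And>s. s \<in> {0..1} \<Longrightarrow> dist s t < d \<Longrightarrow> p s \<in> V"
      using t ptV unfolding openin_euclidean_subtopology_iff by (metis (no_types, lifting) mem_Collect_eq)
    define K where "K = cball t (d/2) \<inter> {0..1}"
    define W where "W = {q \<in> paths_in X. q ` K \<subseteq> V}"
    have "compactin (subtopology euclideanreal {0..1}) K"
      unfolding compactin_subtopology K_def by (auto intro: compact_Int_closed)
    then have "openin (path_space X) W"
      unfolding path_space_def W_def using V by (intro topology_generated_by_Basis) blast
    moreover have "openin (top_of_set {0..1}) (ball t (d/2) \<inter> {0..1})"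
      by (metis Int_commute open_ball openin_open_Int)
    moreover have "p \<in> W"
      unfolding W_def K_def using p \<open>d > 0\<close> d by (auto simp: dist_commute)
    ultimately show "\<exists>N. openin ?T N \<and> (t, p) \<in> N \<and> N \<subseteq> {z \<in> topspace ?T. ?ev z \<in> V}"
      using t \<open>d > 0\<close>
      by (intro exI[of _ "(ball t (d/2) \<inter> {0..1}) \<times> W"])
         (auto simp: openin_prod_Times_iff topspace_path_space W_def K_def)
  qed
  moreover have "?ev \<in> topspace ?T \<rightarrow> topspace X"
    by (auto simp: topspace_path_space paths_in_def pathin_def continuous_map_def)
  ultimately show ?thesis
    unfolding continuous_map_def by blast
qed

lemma homotopic_path_family_endpoints:
  assumes p: "continuous_map Z (path_space X) p"
  shows "homotopic_with (\<lambda>_. True) Z X (\<lambda>z. p z 1) (\<lambda>z. p z 0)"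
proof -
  let ?I = "top_of_set {0..1::real}"
  have "continuous_map (prod_topology ?I Z) euclideanreal fst"
    using continuous_map_fst continuous_map_in_subtopology by blast
  then have "continuous_map (prod_topology ?I Z) euclideanreal (\<lambda>y. 1 - fst y)"
    by (intro continuous_intros)
  moreover have "(\<lambda>y. 1 - fst y) \<in> topspace (prod_topology ?I Z) \<rightarrow> {0..1}"
    by auto
  ultimately have "continuous_map (prod_topology ?I Z) ?I (\<lambda>y. 1 - fst y)"
    unfolding continuous_map_in_subtopology by blast
  moreover have "continuous_map (prod_topology ?I Z) (path_space X) (\<lambda>y. p (snd y))"
    using continuous_map_compose[OF continuous_map_snd p] by (simp add: o_def)
  ultimately have "continuous_map (prod_topology ?I Z) (prod_topology ?I (path_space X))
                     (\<lambda>y. (1 - fst y, p (snd y)))"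
    by (rule continuous_map_pairedI)
  from continuous_map_compose[OF this continuous_map_path_evaluation]
  have "continuous_map (prod_topology ?I Z) X (\<lambda>y. p (snd y) (1 - fst y))"
    by (simp add: o_def)
  then show ?thesis
    unfolding homotopic_with_def by (intro exI[of _ "\<lambda>y. p (snd y) (1 - fst y)"]) simp
qed

lemma continuous_map_based_multipath_component:
  assumes s: "continuous_map Z (based_multipath_space G act X x0 k) s" and j: "j < k"
  shows "continuous_map Z (path_space X) (\<lambda>z. s z j)"
proof -
  have "continuous_map Z (product_topology (\<lambda>i. path_space X) {..<k}) s"
    using s unfolding based_multipath_space_def multipath_space_def
    by (simp add: continuous_map_in_subtopology)
  then show ?thesis
    using continuous_map_compose[OF _ continuous_map_product_projection[of j "{..<k}"]] j
    by (simp add: o_def)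
qed

lemma topspace_based_multipath_space_chain:
  assumes "\<gamma> \<in> topspace (based_multipath_space G act X x0 k)"
  shows "\<gamma> 0 0 = x0" and "Suc i < k \<Longrightarrow> G_orbit G act (\<gamma> (Suc i) 0) = G_orbit G act (\<gamma> i 1)"
  using assms unfolding based_multipath_space_def multipath_space_def topspace_subtopology
  by auto

lemma homotopic_orbits_of_path_ends:
  assumes s: "continuous_map Z (based_multipath_space G act X x0 k) s" and j: "j < k"
  shows "homotopic_with (\<lambda>_. True) Z (orbit_space G X act)
           (\<lambda>z. G_orbit G act (s z j 1)) (\<lambda>z. G_orbit G act (s z j 0))"
proof -
  have "homotopic_with (\<lambda>_. True) Z (orbit_space G X act)
          (G_orbit G act \<circ> (\<lambda>z. s z j 1)) (G_orbit G act \<circ> (\<lambda>z. s z j 0))"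
    by (rule homotopic_with_compose_continuous_map_left[OF homotopic_path_family_endpoints
          [OF continuous_map_based_multipath_component[OF s j]] continuous_map_orbit_map]) simp
  then show ?thesis
    by (simp add: o_def)
qed

lemma orbit_of_path_end_homotopic_to_base_orbit:
  assumes s: "continuous_map Z (based_multipath_space G act X x0 k) s"
  shows "j < k \<Longrightarrow> homotopic_with (\<lambda>_. True) Z (orbit_space G X act)
           (\<lambda>z. G_orbit G act (s z j 1)) (\<lambda>_. G_orbit G act x0)"
proof (induction j)
  case j: 0
  have "s z 0 0 = x0" if "z \<in> topspace Z" for z
    using s that topspace_based_multipath_space_chain(1) by (force simp: continuous_map_def)
  then show ?case
    by (intro homotopic_with_eq[OF homotopic_orbits_of_path_ends[OF s j]]) simp_all
next
  case (Suc j)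
  have "G_orbit G act (s z (Suc j) 0) = G_orbit G act (s z j 1)" if "z \<in> topspace Z" for z
    using s that Suc.prems topspace_based_multipath_space_chain(2) by (force simp: continuous_map_def)
  then have "homotopic_with (\<lambda>_. True) Z (orbit_space G X act)
          (\<lambda>z. G_orbit G act (s z (Suc j) 1)) (\<lambda>z. G_orbit G act (s z j 1))"
    by (intro homotopic_with_eq[OF homotopic_orbits_of_path_ends[OF s Suc.prems]]) simp_all
  moreover have "homotopic_with (\<lambda>_. True) Z (orbit_space G X act)
                   (\<lambda>z. G_orbit G act (s z j 1)) (\<lambda>_. G_orbit G act x0)"
    using Suc by simp
  ultimately show ?case
    by (rule homotopic_with_trans)
qed

lemma orbit_map_nullhomotopic_over_section:
  assumes "k \<ge> 1"
    and s: "continuous_map (subtopology X U) (based_multipath_space G act X x0 k) s"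
    and "homotopic_with (\<lambda>_. True) (subtopology X U) X (end_map k \<circ> s) id"
  shows "homotopic_with (\<lambda>_. True) (subtopology X U) (orbit_space G X act)
           (G_orbit G act) (\<lambda>_. G_orbit G act x0)"
proof -
  have "homotopic_with (\<lambda>_. True) (subtopology X U) (orbit_space G X act)
          (G_orbit G act \<circ> id) (G_orbit G act \<circ> (end_map k \<circ> s))"
    by (rule homotopic_with_symD, rule homotopic_with_compose_continuous_map_left
          [OF assms(3) continuous_map_orbit_map]) simp
  moreover have "homotopic_with (\<lambda>_. True) (subtopology X U) (orbit_space G X act)
          (\<lambda>z. G_orbit G act (s z (k - 1) 1)) (\<lambda>_. G_orbit G act x0)"
    using orbit_of_path_end_homotopic_to_base_orbit[OF s] \<open>k \<ge> 1\<close> by simp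
  ultimately show ?thesis
    unfolding end_map_def o_def id_def by (rule homotopic_with_trans)
qed

theorem mainTheorem5:
  fixes G :: "('g, 'b) monoid_scheme" and TG :: "'g topology"
    and X :: "'a topology" and act :: "'g \<Rightarrow> 'a \<Rightarrow> 'a" and x0 :: 'a
  assumes "G_space G TG X act"
    and "x0 \<in> topspace X"
  shows "map_cat X (orbit_space G X act) (G_orbit G act) \<le> cat_G_infty G act X x0"
  unfolding cat_G_infty_def cat_G_k_def
proof (rule INF_greatest, rule map_cat_le_secat)
  fix k U s
  assume "k \<in> {1..}"
    and s: "continuous_map (subtopology X U) (based_multipath_space G act X x0 k) s"
    and "homotopic_with (\<lambda>_. True) (subtopology X U) X (end_map k \<circ> s) id"
  then have "homotopic_with (\<lambda>_. True) (subtopology X U) (orbit_space G X act)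
               (G_orbit G act) (\<lambda>_. G_orbit G act x0)"
    by (intro orbit_map_nullhomotopic_over_section[OF _ s]) simp_all
  then show "\<exists>c. homotopic_with (\<lambda>_. True) (subtopology X U) (orbit_space G X act) (G_orbit G act) (\<lambda>_. c)"
    by blast
qed

end
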